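(* Let $\mathbf{X},\mathbf{X}'\in\mathbb{R}^{n\times d}$ be two matrices that differ only in one row, say row $i$, and such that $\|\mathbf{X}_{i,:}-\mathbf{X}'_{i,:}\|_2\le 1$. Let $\mathbf{U}\in\mathbb{R}^{d\times k}$ be a random matrix whose $k$ columns are drawn independently from the uniform distribution on the unit sphere $\mathbb{S}^{d-1}=\{\mathbf{u}\in\mathbb{R}^d:\|\mathbf{u}\|_2=1\}$. Then for every $\delta\in(0,1)$, with probability at least $1-\delta$ (over the draw of $\mathbf{U}$), $$\|\mathbf{X}\mathbf{U}-\mathbf{X}'\mathbf{U}\|_F^2\le w(k,\delta),\qquad w(k,\delta)\doteq\frac{k}{d}+\frac{2}{3}\ln\frac{1}{\delta}+\frac{2}{d}\sqrt{k\,\frac{d-1}{d+2}\ln\frac{1}{\delta}}.$$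
   Context: $\|\cdot\|_F$ denotes the Frobenius norm and $\mathbf{X}_{i,:}$ the $i$-th row of $\mathbf{X}$. *)

theory Defs
  imports "HOL-Probability.Probability"
begin

(* Uniform (normalised surface) distribution on the unit sphere S^{d-1} of real^'d,
   realised as the cone measure: the push-forward of the uniform distribution on the
   open unit ball under the radial projection x |-> x / norm x.  For the Euclidean
   sphere this coincides with the normalised surface (Hausdorff) measure. *)
definition sphere_unif :: "(real ^ 'd::finite) measure" where
  "sphere_unif = distr (uniform_measure lborel (ball 0 1)) borel (\<lambda>x. x /\<^sub>R norm x)"

definition sphere_cols :: "('k::finite \<Rightarrow> real ^ 'd::finite) measure" where
  "sphere_cols = PiM UNIV (\<lambda>_. sphere_unif)"

definition cols_to_mat :: "('k::finite \<Rightarrow> real ^ 'd::finite) \<Rightarrow> real ^ 'k ^ 'd" where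
  "cols_to_mat u = (\<chi> a j. u j $ a)"

definition frob_norm :: "real ^ 'm::finite ^ 'n::finite \<Rightarrow> real" where
  "frob_norm A = sqrt (\<Sum>i\<in>UNIV. \<Sum>j\<in>UNIV. (A $ i $ j)\<^sup>2)"

definition w_bound :: "nat \<Rightarrow> nat \<Rightarrow> real \<Rightarrow> real" where
  "w_bound d k \<delta> = real k / real d + 2/3 * ln (1/\<delta>)
     + 2 / real d * sqrt (real k * ((real d - 1) / (real d + 2)) * ln (1/\<delta>))"

end

theory Submission
  imports Defs
begin

(* Let v be the difference of the two rows, so |v| <= 1. The squared Frobenius norm equals
   S = sum_j (v . u_j)^2, a sum of k independent copies of Z = (v . u)^2 with u uniform on the
   sphere. Rotation invariance of the uniform distribution reduces the moments of Z to those of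
   one coordinate, and polarization gives E Z = |v|^2 / d and E Z^2 = 3 |v|^4 / (d (d + 2)), so
   Var Z <= 2 (d - 1) / (d^2 (d + 2)). Since 0 <= Z <= 1, Bernstein's bound on the moment
   generating function of Z - E Z, the independence of the columns and a Chernoff bound with
   Bernstein's choice of parameter give P(S > w(k, delta)) <= delta. *)

lemma prod_Basis_cart: "(\<Prod>c\<in>Basis. x \<bullet> c) = (\<Prod>i\<in>UNIV. x $ i)" for x :: "real^'n::finite"
  by (simp add: Basis_vec_def inner_axis prod.UNION_disjoint axis_eq_axis)

lemma emeasure_lborel_box_cart:
  fixes a b :: "real^'n::finite"
  assumes "\<And>i. a $ i \<le> b $ i"
  shows "emeasure lborel (box a b) = (\<Prod>i\<in>UNIV. b $ i - a $ i)"
proof -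
  have "\<forall>c\<in>Basis. a \<bullet> c \<le> b \<bullet> c"
    using assms by (auto simp: Basis_vec_def inner_axis)
  then show ?thesis
    by (simp add: emeasure_lborel_box_eq prod_Basis_cart)
qed

lemma measurable_orthogonal_transformation:
  "orthogonal_transformation f \<Longrightarrow> f \<in> borel_measurable borel"
  for f :: "'a::euclidean_space \<Rightarrow> 'a"
  by (intro borel_measurable_continuous_onI linear_continuous_on)
    (simp add: linear_conv_bounded_linear[symmetric] orthogonal_transformation_linear)

lemma distr_lborel_orthogonal_wellorder:
  fixes f :: "real^'n::{finite,wellorder} \<Rightarrow> real^'n::_"
  assumes f: "orthogonal_transformation f"
  shows "distr lborel borel f = lborel"
proof (rule lborel_eqI[symmetric])
  fix l u :: "real^'n::_"
  assume le: "\<And>b. b \<in> Basis \<Longrightarrow> l \<bullet> b \<le> u \<bullet> b"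
  let ?T = "inv f ` box l u"
  have g: "orthogonal_transformation (inv f)"
    using f by (rule orthogonal_transformation_inv)
  have T: "f -` box l u = ?T"
    using f by (simp add: bij_vimage_eq_inv_image orthogonal_transformation_bij)
  have "?T \<in> sets borel"
    unfolding T[symmetric] using f
    by (intro measurable_sets_borel[OF measurable_orthogonal_transformation]) auto
  moreover have "bounded ?T"
    using g by (intro bounded_linear_image bounded_box)
      (simp add: linear_conv_bounded_linear[symmetric] orthogonal_transformation_linear)
  ultimately have "emeasure lborel ?T = measure lebesgue ?T"
    using emeasure_bounded_finite[of ?T] by (simp add: emeasure_eq_ennreal_measure less_top)
  also have "\<dots> = measure lebesgue (box l u)"
    using measure_orthogonal_image[OF g lmeasurable_box] by simp
  also have "\<dots> = emeasure lborel (box l u)"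
    using emeasure_lborel_box_finite[of l u] by (subst emeasure_eq_ennreal_measure) auto
  finally show "emeasure (distr lborel borel f) (box l u) = (\<Prod>b\<in>Basis. (u - l) \<bullet> b)"
    using le T measurable_orthogonal_transformation[OF f]
    by (simp add: emeasure_distr emeasure_lborel_box_eq)
qed simp

(* HOL-Analysis proves invariance of Lebesgue measure under orthogonal maps
   (measure_orthogonal_image) only for well-ordered index types. The copy 'a ranked of a countable
   type, ordered through to_nat, and the coordinate relabelling between real^'a and real^'a ranked
   transfer it to arbitrary finite index types. *)

typedef 'a ranked = "UNIV :: 'a set" by simp

instance ranked :: (finite) finite
proof
  have "finite (range (Rep_ranked :: 'a ranked \<Rightarrow> 'a))" and "inj (Rep_ranked :: 'a ranked \<Rightarrow> 'a)"
    by (simp_all add: inj_on_def Rep_ranked_inject)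
  then show "finite (UNIV :: 'a ranked set)"
    by (rule finite_imageD)
qed

instantiation ranked :: (countable) linorder
begin
definition less_eq_ranked :: "'a ranked \<Rightarrow> 'a ranked \<Rightarrow> bool"
  where "x \<le> y \<longleftrightarrow> to_nat (Rep_ranked x) \<le> to_nat (Rep_ranked y)"
definition less_ranked :: "'a ranked \<Rightarrow> 'a ranked \<Rightarrow> bool"
  where "x < y \<longleftrightarrow> to_nat (Rep_ranked x) < to_nat (Rep_ranked y)"
instance
  by standard (auto simp: less_eq_ranked_def less_ranked_def Rep_ranked_inject)
end

instance ranked :: (countable) wellorder
proof
  fix P :: "'a ranked \<Rightarrow> bool" and a
  assume step: "\<And>x. (\<And>y. y < x \<Longrightarrow> P y) \<Longrightarrow> P x"
  have "P x" if "to_nat (Rep_ranked x) = n" for n x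
    using that
  proof (induction n arbitrary: x rule: less_induct)
    case (less n)
    show ?case
    proof (rule step)
      fix y assume "y < x"
      then show "P y"
        using less.IH[OF _ refl] less.prems by (simp add: less_ranked_def)
    qed
  qed
  then show "P a" by blast
qed

definition to_ranked_vec :: "real^'a \<Rightarrow> real^'a ranked" where
  "to_ranked_vec x = (\<chi> j. x $ Rep_ranked j)"

definition of_ranked_vec :: "real^'a ranked \<Rightarrow> real^'a" where
  "of_ranked_vec y = (\<chi> i. y $ Abs_ranked i)"

lemma bij_Rep_ranked: "bij Rep_ranked"
  by (simp add: bij_def inj_on_def Rep_ranked_inject type_definition.Rep_range[OF type_definition_ranked])

lemma bij_Abs_ranked: "bij Abs_ranked"
  using type_definition.Abs_image[OF type_definition_ranked]
  by (simp add: bij_def inj_on_def Abs_ranked_inject)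

lemma of_ranked_vec_to_ranked_vec [simp]: "of_ranked_vec (to_ranked_vec x) = x"
  by (simp add: to_ranked_vec_def of_ranked_vec_def Abs_ranked_inverse)

lemma to_ranked_vec_of_ranked_vec [simp]: "to_ranked_vec (of_ranked_vec y) = y"
  by (simp add: to_ranked_vec_def of_ranked_vec_def Rep_ranked_inverse)

lemma inner_to_ranked_vec [simp]: "to_ranked_vec x \<bullet> to_ranked_vec y = x \<bullet> y"
  using sum.reindex_bij_betw[OF bij_Rep_ranked, of "\<lambda>i. x $ i * y $ i"]
  unfolding to_ranked_vec_def inner_vec_def by simp

lemma linear_to_ranked_vec: "linear to_ranked_vec"
  by (auto simp: to_ranked_vec_def linear_iff vec_eq_iff)

lemma measurable_to_ranked_vec [measurable]: "to_ranked_vec \<in> borel_measurable borel"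
  by (intro borel_measurable_continuous_onI linear_continuous_on)
    (simp add: linear_conv_bounded_linear[symmetric] linear_to_ranked_vec)

lemma linear_of_ranked_vec: "linear of_ranked_vec"
  by (auto simp: of_ranked_vec_def linear_iff vec_eq_iff)

lemma measurable_of_ranked_vec [measurable]: "of_ranked_vec \<in> borel_measurable borel"
  by (intro borel_measurable_continuous_onI linear_continuous_on)
    (simp add: linear_conv_bounded_linear[symmetric] linear_of_ranked_vec)

lemma distr_lborel_to_ranked_vec:
  "distr lborel borel to_ranked_vec = (lborel :: (real^'a::finite ranked) measure)"
proof (rule lborel_eqI[symmetric])
  fix l u :: "real^'a ranked"
  assume "\<And>b. b \<in> Basis \<Longrightarrow> l \<bullet> b \<le> u \<bullet> b"
  then have le: "l $ j \<le> u $ j" for j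
    by (simp add: cart_eq_inner_axis axis_in_Basis_iff)
  have "to_ranked_vec -` box l u = box (of_ranked_vec l) (of_ranked_vec u)"
    by (simp add: to_ranked_vec_def of_ranked_vec_def mem_box_cart set_eq_iff)
      (metis Abs_ranked_inverse Rep_ranked_inverse UNIV_I)
  then have "emeasure (distr lborel borel to_ranked_vec) (box l u)
      = emeasure lborel (box (of_ranked_vec l) (of_ranked_vec u))"
    by (simp add: emeasure_distr)
  also have "\<dots> = (\<Prod>i\<in>UNIV. u $ Abs_ranked i - l $ Abs_ranked i)"
    using le by (simp add: emeasure_lborel_box_cart of_ranked_vec_def)
  also have "\<dots> = (\<Prod>i\<in>UNIV. u $ i - l $ i)"
    by (rule arg_cong[where f=ennreal], rule prod.reindex_bij_betw[OF bij_Abs_ranked])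
  finally show "emeasure (distr lborel borel to_ranked_vec) (box l u) = (\<Prod>b\<in>Basis. (u - l) \<bullet> b)"
    by (simp add: prod_Basis_cart)
qed simp

lemma distr_lborel_of_ranked_vec:
  "distr lborel borel of_ranked_vec = (lborel :: (real^'a::finite) measure)"
proof -
  have "distr lborel borel of_ranked_vec
      = distr (distr lborel borel to_ranked_vec) borel (of_ranked_vec :: real^'a ranked \<Rightarrow> _)"
    by (simp only: distr_lborel_to_ranked_vec)
  also have "\<dots> = distr lborel borel (of_ranked_vec \<circ> to_ranked_vec)"
    by (rule distr_distr) (simp_all add: measurable_to_ranked_vec measurable_of_ranked_vec)
  also have "\<dots> = lborel"
    by (simp add: comp_def distr_id2)
  finally show ?thesis .
qed

lemma distr_lborel_orthogonal:
  fixes f :: "real^'n::finite \<Rightarrow> real^'n"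
  assumes f: "orthogonal_transformation f"
  shows "distr lborel borel f = lborel"
proof -
  let ?g = "to_ranked_vec \<circ> f \<circ> of_ranked_vec"
  have g: "orthogonal_transformation ?g"
  proof -
    have "linear ?g"
      using orthogonal_transformation_linear[OF f]
      by (intro linear_compose linear_to_ranked_vec linear_of_ranked_vec)
    moreover have "?g v \<bullet> ?g w = v \<bullet> w" for v w
    proof -
      have "?g v \<bullet> ?g w = of_ranked_vec v \<bullet> of_ranked_vec w"
        using f by (simp add: orthogonal_transformation_def)
      also have "\<dots> = to_ranked_vec (of_ranked_vec v) \<bullet> to_ranked_vec (of_ranked_vec w)"
        by (simp only: inner_to_ranked_vec)
      finally show ?thesis
        by simp
    qed
    ultimately show ?thesis
      by (simp add: orthogonal_transformation_def)
  qed
  have "distr lborel borel f = distr (distr lborel borel of_ranked_vec) borel f"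
    by (simp only: distr_lborel_of_ranked_vec)
  also have "\<dots> = distr lborel borel (f \<circ> of_ranked_vec)"
    using measurable_orthogonal_transformation[OF f] by (rule distr_distr) simp
  also have "f \<circ> of_ranked_vec = of_ranked_vec \<circ> ?g"
    by (simp add: fun_eq_iff)
  also have "distr lborel borel (of_ranked_vec \<circ> ?g) = distr (distr lborel borel ?g) borel of_ranked_vec"
    by (rule distr_distr[symmetric])
      (simp_all add: measurable_of_ranked_vec measurable_orthogonal_transformation[OF g])
  also have "\<dots> = lborel"
    by (simp only: distr_lborel_orthogonal_wellorder[OF g] distr_lborel_of_ranked_vec)
  finally show ?thesis .
qed

lemma prob_space_uniform_ball:
  "prob_space (uniform_measure lborel (ball (0::'a::euclidean_space) 1))"
proof (rule prob_space_uniform_measure)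
  have "unit_ball_vol (real DIM('a)) \<noteq> 0"
    using unit_ball_vol_pos[of "real DIM('a)"] by linarith
  then show "emeasure lborel (ball (0::'a) 1) \<noteq> 0"
    by (simp add: emeasure_ball)
qed (simp add: emeasure_ball)

lemma prob_space_sphere_unif: "prob_space sphere_unif"
  unfolding sphere_unif_def
  by (rule prob_space.prob_space_distr[OF prob_space_uniform_ball]) simp

lemma sets_sphere_unif [simp, measurable_cong]: "sets sphere_unif = sets borel"
  by (simp add: sphere_unif_def)

lemma AE_sphere_unif_norm: "AE u in sphere_unif. norm u = 1"
proof -
  have "AE x in uniform_measure lborel (ball (0::real^'d::finite) 1). x \<noteq> 0"
    by (intro AE_uniform_measureI) (auto intro: AE_lborel_singleton[THEN eventually_mono])
  then have "AE x in uniform_measure lborel (ball (0::real^'d::finite) 1). norm (x /\<^sub>R norm x) = 1"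
    by eventually_elim simp
  then show ?thesis
    unfolding sphere_unif_def by (subst AE_distr_iff) auto
qed

lemma integrable_sphere_unif_bounded:
  fixes f :: "real^'d::finite \<Rightarrow> real"
  assumes [measurable]: "f \<in> borel_measurable borel" and "\<And>u. norm u = 1 \<Longrightarrow> \<bar>f u\<bar> \<le> B"
  shows "integrable sphere_unif f"
proof -
  interpret prob_space "sphere_unif :: (real^'d) measure"
    by (rule prob_space_sphere_unif)
  show ?thesis
    using AE_sphere_unif_norm assms(2)
    by (intro integrable_const_bound[where B=B]) (auto elim!: eventually_mono)
qed

lemma integral_sphere_unif_norm:
  fixes g :: "real \<Rightarrow> real"
  assumes [measurable]: "g \<in> borel_measurable borel"
  shows "(\<integral>u. g (norm u) \<partial>(sphere_unif :: (real^'d::finite) measure)) = g 1"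
proof -
  interpret prob_space "sphere_unif :: (real^'d) measure"
    by (rule prob_space_sphere_unif)
  have "(\<integral>u. g (norm u) \<partial>(sphere_unif :: (real^'d) measure))
      = (\<integral>u. g 1 \<partial>(sphere_unif :: (real^'d) measure))"
    by (intro integral_cong_AE) (auto intro: AE_sphere_unif_norm[THEN eventually_mono])
  then show ?thesis
    using prob_space by simp
qed

lemma distr_uniform_ball_orthogonal:
  fixes f :: "real^'n::finite \<Rightarrow> real^'n"
  assumes f: "orthogonal_transformation f"
  shows "distr (uniform_measure lborel (ball 0 1)) borel f = uniform_measure lborel (ball 0 1)"
proof (rule measure_eqI)
  fix A assume "A \<in> sets (distr (uniform_measure lborel (ball (0::real^'n) 1)) borel f)"
  then have A [measurable]: "A \<in> sets borel"
    by simp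
  have f_meas [measurable]: "f \<in> borel_measurable borel"
    using f by (rule measurable_orthogonal_transformation)
  have [measurable]: "f -` A \<in> sets borel"
    using f_meas A by (rule measurable_sets_borel)
  have ball: "f -` ball 0 1 = ball 0 1"
    using f by (auto simp: orthogonal_transformation_norm)
  have "emeasure (distr (uniform_measure lborel (ball 0 1)) borel f) A
      = emeasure lborel (f -` (ball 0 1 \<inter> A)) / emeasure lborel (ball (0::real^'n) 1)"
    by (simp add: emeasure_distr ball)
  also have "emeasure lborel (f -` (ball 0 1 \<inter> A)) = emeasure (distr lborel borel f) (ball 0 1 \<inter> A)"
    by (simp add: emeasure_distr)
  finally show "emeasure (distr (uniform_measure lborel (ball 0 1)) borel f) A
      = emeasure (uniform_measure lborel (ball 0 1)) A"
    by (simp add: distr_lborel_orthogonal[OF f])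
qed simp

lemma distr_sphere_unif_orthogonal:
  fixes f :: "real^'d::finite \<Rightarrow> real^'d"
  assumes f: "orthogonal_transformation f"
  shows "distr sphere_unif borel f = sphere_unif"
proof -
  let ?U = "uniform_measure lborel (ball (0::real^'d) 1)"
  have f_meas [measurable]: "f \<in> borel_measurable borel"
    using f by (rule measurable_orthogonal_transformation)
  have comm: "f \<circ> (\<lambda>x. x /\<^sub>R norm x) = (\<lambda>x. x /\<^sub>R norm x) \<circ> f"
    using f orthogonal_transformation_linear[OF f]
    by (auto simp: fun_eq_iff orthogonal_transformation_norm linear_cmul)
  have "distr sphere_unif borel f = distr ?U borel (f \<circ> (\<lambda>x. x /\<^sub>R norm x))"
    unfolding sphere_unif_def by (subst distr_distr) auto
  also have "\<dots> = distr (distr ?U borel f) borel (\<lambda>x. x /\<^sub>R norm x)"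
    unfolding comm by (subst distr_distr) auto
  also have "\<dots> = sphere_unif"
    unfolding distr_uniform_ball_orthogonal[OF f] sphere_unif_def ..
  finally show ?thesis .
qed

lemma integral_sphere_unif_orthogonal:
  fixes f :: "real^'d::finite \<Rightarrow> real^'d" and g :: "real^'d \<Rightarrow> real"
  assumes f: "orthogonal_transformation f" and g [measurable]: "g \<in> borel_measurable borel"
  shows "(\<integral>u. g (f u) \<partial>sphere_unif) = (\<integral>u. g u \<partial>sphere_unif)"
proof -
  have "(\<integral>u. g u \<partial>sphere_unif) = (\<integral>u. g u \<partial>distr sphere_unif borel f)"
    by (simp add: distr_sphere_unif_orthogonal[OF f])
  also have "\<dots> = (\<integral>u. g (f u) \<partial>sphere_unif)"
    using measurable_orthogonal_transformation[OF f] by (intro integral_distr) simp_all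
  finally show ?thesis ..
qed

lemma integral_sphere_unif_inner_unit:
  fixes e e' :: "real^'d::finite" and g :: "real \<Rightarrow> real"
  assumes "norm e = 1" "norm e' = 1" and g [measurable]: "g \<in> borel_measurable borel"
  shows "(\<integral>u. g (e \<bullet> u) \<partial>sphere_unif) = (\<integral>u. g (e' \<bullet> u) \<partial>sphere_unif)"
proof -
  obtain f where f: "orthogonal_transformation f" and fe: "f e = e'"
    using orthogonal_transformation_exists_1[OF assms(1,2)] by blast
  have "(\<integral>u. g (e' \<bullet> u) \<partial>sphere_unif) = (\<integral>u. g (e' \<bullet> f u) \<partial>sphere_unif)"
    using f by (rule integral_sphere_unif_orthogonal[symmetric]) measurable
  also have "\<dots> = (\<integral>u. g (e \<bullet> u) \<partial>sphere_unif)"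
    unfolding fe[symmetric] using f by (simp add: orthogonal_transformation_def)
  finally show ?thesis ..
qed

lemma integral_sphere_unif_inner_power:
  fixes v e :: "real^'d::finite"
  assumes e: "norm e = 1"
  shows "(\<integral>u. (v \<bullet> u) ^ p \<partial>sphere_unif) = norm v ^ p * (\<integral>u. (e \<bullet> u) ^ p \<partial>sphere_unif)"
proof (cases "v = 0")
  case True
  then show ?thesis
    by (cases p) simp_all
next
  case False
  let ?e = "v /\<^sub>R norm v"
  have "(v \<bullet> u) ^ p = norm v ^ p * (?e \<bullet> u) ^ p" for u
  proof -
    have "v \<bullet> u = norm v * (?e \<bullet> u)"
      using False by simp
    then show ?thesis
      by (simp only: power_mult_distrib)
  qed
  then have "(\<integral>u. (v \<bullet> u) ^ p \<partial>sphere_unif) = norm v ^ p * (\<integral>u. (?e \<bullet> u) ^ p \<partial>sphere_unif)"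
    by simp
  also have "(\<integral>u. (?e \<bullet> u) ^ p \<partial>sphere_unif) = (\<integral>u. (e \<bullet> u) ^ p \<partial>sphere_unif)"
    using False e by (intro integral_sphere_unif_inner_unit) auto
  finally show ?thesis .
qed

lemma integrable_sphere_unif_inner_power:
  "integrable sphere_unif (\<lambda>u::real^'d::finite. (w \<bullet> u) ^ p)"
proof (rule integrable_sphere_unif_bounded[where B="norm w ^ p"])
  fix u :: "real^'d" assume "norm u = 1"
  then show "\<bar>(w \<bullet> u) ^ p\<bar> \<le> norm w ^ p"
    using Cauchy_Schwarz_ineq2[of w u] by (simp add: power_abs power_mono)
qed measurable

lemma power2_norm_cart: "(norm x)\<^sup>2 = (\<Sum>i\<in>UNIV. (x $ i)\<^sup>2)" for x :: "real^'n::finite"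
  unfolding power2_norm_eq_inner inner_vec_def by (simp add: power2_eq_square)

lemma card_mult_integral_sphere_unif_power2: "real CARD('d) * (\<integral>u. (u $ a) ^ 2 \<partial>sphere_unif) = 1"
  for a :: "'d::finite"
proof -
  let ?S = "sphere_unif :: (real^'d) measure"
  have coord: "(\<integral>u. (u $ b) ^ 2 \<partial>?S) = (\<integral>u. (u $ a) ^ 2 \<partial>?S)" for b :: 'd
    using integral_sphere_unif_inner_unit[of "axis b 1" "axis a 1" "\<lambda>t. t ^ 2"]
    by (simp add: inner_axis')
  have "(\<Sum>b\<in>UNIV. \<integral>u. (u $ b) ^ 2 \<partial>?S) = (\<Sum>b\<in>(UNIV::'d set). \<integral>u. (u $ a) ^ 2 \<partial>?S)"
    by (intro sum.cong refl coord)
  then have "real CARD('d) * (\<integral>u. (u $ a) ^ 2 \<partial>?S) = (\<Sum>b\<in>UNIV. \<integral>u. (u $ b) ^ 2 \<partial>?S)"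
    by simp
  also have "\<dots> = (\<integral>u. (\<Sum>b\<in>UNIV. (u $ b) ^ 2) \<partial>?S)"
  proof -
    have "integrable ?S (\<lambda>u. (u $ b) ^ 2)" for b
      using integrable_sphere_unif_inner_power[of "axis b 1" 2] by (simp add: inner_axis')
    then show ?thesis
      by simp
  qed
  also have "\<dots> = (\<integral>u. norm u ^ 2 \<partial>?S)"
    by (simp add: power2_norm_cart)
  also have "\<dots> = 1"
    by (simp add: integral_sphere_unif_norm[where g="\<lambda>t. t ^ 2"])
  finally show ?thesis .
qed

lemma integral_sphere_unif_inner_power2:
  "(\<integral>u. (v \<bullet> u) ^ 2 \<partial>sphere_unif) = norm v ^ 2 / real CARD('d)" for v :: "real^'d::finite"
proof -
  fix a :: 'd
  show ?thesis
    using integral_sphere_unif_inner_power[of "axis a 1" v 2]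
      card_mult_integral_sphere_unif_power2[of a]
    by (simp add: inner_axis' field_simps)
qed

lemma sum_power4_plus_minus_cart:
  fixes u :: "real^'d::finite"
  shows "(\<Sum>b\<in>UNIV. \<Sum>c\<in>UNIV. (u $ b + u $ c) ^ 4 + (u $ b - u $ c) ^ 4)
       = 4 * real CARD('d) * (\<Sum>b\<in>UNIV. (u $ b) ^ 4) + 12 * norm u ^ 4"
proof -
  have quartic: "(x + y) ^ 4 + (x - y) ^ 4 = 2 * x ^ 4 + 12 * (x\<^sup>2 * y\<^sup>2) + 2 * y ^ 4"
    for x y :: real
    by algebra
  have "(\<Sum>b\<in>UNIV. \<Sum>c\<in>UNIV. (u $ b + u $ c) ^ 4 + (u $ b - u $ c) ^ 4)
      = (\<Sum>b\<in>UNIV. \<Sum>c\<in>(UNIV::'d set). 2 * (u $ b) ^ 4)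
        + 12 * ((\<Sum>b\<in>UNIV. (u $ b)\<^sup>2) * (\<Sum>c\<in>UNIV. (u $ c)\<^sup>2))
        + (\<Sum>b\<in>(UNIV::'d set). \<Sum>c\<in>UNIV. 2 * (u $ c) ^ 4)"
    by (simp add: quartic sum.distrib sum_product flip: sum_distrib_left)
  also have "\<dots> = 4 * real CARD('d) * (\<Sum>b\<in>UNIV. (u $ b) ^ 4) + 12 * norm u ^ 4"
    by (simp add: power2_norm_cart[symmetric] flip: sum_distrib_left)
  finally show ?thesis .
qed

lemma norm_axis_plus_minus_power4:
  "norm (axis b 1 + axis c 1 :: real^'d::finite) ^ 4 + norm (axis b 1 - axis c 1 :: real^'d) ^ 4
     = (if b = c then 16 else 8)"
proof -
  have "norm x ^ 4 = (x \<bullet> x)\<^sup>2" for x :: "real^'d"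
    by (simp add: power2_norm_eq_inner[symmetric] power_mult[symmetric])
  then show ?thesis
    by (simp add: inner_add_left inner_add_right inner_diff_left inner_diff_right inner_axis_axis)
qed

lemma integral_sphere_unif_sum_power4_plus_minus:
  "(\<integral>u. (\<Sum>b\<in>UNIV. \<Sum>c\<in>UNIV. (u $ b + u $ c) ^ 4 + (u $ b - u $ c) ^ 4)
      \<partial>(sphere_unif :: (real^'d) measure))
     = 8 * real CARD('d) * (real CARD('d) + 1) * (\<integral>u. (u $ a) ^ 4 \<partial>sphere_unif)"
  for a :: "'d::finite"
proof -
  let ?S = "sphere_unif :: (real^'d) measure" and ?m = "\<integral>u. (u $ a) ^ 4 \<partial>sphere_unif"
  have power4: "(\<integral>u. (w \<bullet> u) ^ 4 \<partial>?S) = norm w ^ 4 * ?m" for w :: "real^'d"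
    using integral_sphere_unif_inner_power[of "axis a 1" w 4] by (simp add: inner_axis')
  have "(u $ b + u $ c) ^ 4 + (u $ b - u $ c) ^ 4
      = ((axis b 1 + axis c 1) \<bullet> u) ^ 4 + ((axis b 1 - axis c 1) \<bullet> u) ^ 4"
    for u :: "real^'d" and b c
    by (simp add: inner_add_left inner_diff_left inner_axis')
  then have "(\<integral>u. (\<Sum>b\<in>UNIV. \<Sum>c\<in>UNIV. (u $ b + u $ c) ^ 4 + (u $ b - u $ c) ^ 4) \<partial>?S)
      = (\<Sum>b\<in>UNIV. \<Sum>c\<in>UNIV. (\<integral>u. ((axis b 1 + axis c 1 :: real^'d) \<bullet> u) ^ 4 \<partial>?S)
                                 + (\<integral>u. ((axis b 1 - axis c 1) \<bullet> u) ^ 4 \<partial>?S))"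
    by (simp add: integral_sum integrable_sum Bochner_Integration.integral_add
        integrable_sphere_unif_inner_power)
  also have "\<dots> = (\<Sum>b\<in>(UNIV::'d set). \<Sum>c\<in>UNIV. (if b = c then 16 else 8) * ?m)"
    by (simp add: power4 norm_axis_plus_minus_power4 flip: distrib_right)
  also have "\<dots> = (\<Sum>b\<in>(UNIV::'d set). \<Sum>c\<in>UNIV. 8 * ?m + (if b = c then 8 * ?m else 0))"
    by (intro sum.cong) simp_all
  also have "\<dots> = 8 * real CARD('d) * (real CARD('d) + 1) * ?m"
    by (simp add: sum.distrib algebra_simps)
  finally show ?thesis .
qed

lemma card_mult_integral_sphere_unif_power4:
  "real CARD('d) * (real CARD('d) + 2) * (\<integral>u. (u $ a) ^ 4 \<partial>sphere_unif) = 3" for a :: "'d::finite"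
proof -
  let ?S = "sphere_unif :: (real^'d) measure"
  let ?d = "real CARD('d)" and ?m = "\<integral>u. (u $ a) ^ 4 \<partial>?S"
  have coord: "(\<integral>u. (u $ b) ^ 4 \<partial>?S) = ?m" for b :: 'd
    using integral_sphere_unif_inner_unit[of "axis b 1" "axis a 1" "\<lambda>t. t ^ 4"]
    by (simp add: inner_axis')
  have int_coord: "integrable ?S (\<lambda>u. (u $ b) ^ 4)" for b
    using integrable_sphere_unif_inner_power[of "axis b 1" 4] by (simp add: inner_axis')
  have int_norm: "integrable ?S (\<lambda>u. norm u ^ 4)"
    by (rule integrable_sphere_unif_bounded[where B=1]) auto
  have "(\<Sum>b\<in>UNIV. \<integral>u. (u $ b) ^ 4 \<partial>?S) = (\<Sum>b\<in>(UNIV::'d set). ?m)"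
    by (intro sum.cong refl coord)
  then have sum_coord: "(\<Sum>b\<in>UNIV. \<integral>u. (u $ b) ^ 4 \<partial>?S) = ?d * ?m"
    by simp
  have "8 * ?d * (?d + 1) * ?m
      = (\<integral>u. (\<Sum>b\<in>UNIV. \<Sum>c\<in>UNIV. (u $ b + u $ c) ^ 4 + (u $ b - u $ c) ^ 4) \<partial>?S)"
    by (rule integral_sphere_unif_sum_power4_plus_minus[symmetric])
  also have "\<dots> = (\<integral>u. 4 * ?d * (\<Sum>b\<in>UNIV. (u $ b) ^ 4) + 12 * norm u ^ 4 \<partial>?S)"
    by (simp add: sum_power4_plus_minus_cart)
  also have "\<dots> = 4 * ?d * (\<Sum>b\<in>UNIV. \<integral>u. (u $ b) ^ 4 \<partial>?S) + 12 * (\<integral>u. norm u ^ 4 \<partial>?S)"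
    by (simp add: integral_sum integrable_sum Bochner_Integration.integral_add int_norm int_coord)
  also have "\<dots> = 4 * ?d * (?d * ?m) + 12"
    by (simp add: sum_coord integral_sphere_unif_norm[where g="\<lambda>t. t ^ 4"])
  finally have "8 * ?d * (?d + 1) * ?m = 4 * ?d * (?d * ?m) + 12" .
  then show ?thesis
    by algebra
qed

lemma integral_sphere_unif_inner_power4:
  "(\<integral>u. (v \<bullet> u) ^ 4 \<partial>sphere_unif) = 3 * norm v ^ 4 / (real CARD('d) * (real CARD('d) + 2))"
  for v :: "real^'d::finite"
proof -
  fix a :: 'd
  have "real CARD('d) * (real CARD('d) + 2) \<noteq> 0"
    by simp
  then show ?thesis
    using integral_sphere_unif_inner_power[of "axis a 1" v 4]
      card_mult_integral_sphere_unif_power4[of a]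
    by (simp add: inner_axis' field_simps)
qed

lemma two_mult_three_power_le_fact: "2 * 3 ^ n \<le> (fact (n + 2) :: real)"
proof (induction n)
  case (Suc n)
  have "fact (Suc n + 2) = real (n + 3) * (fact (n + 2) :: real)"
    by (simp add: fact_Suc add.commute del: of_nat_add)
  also have "\<dots> \<ge> 3 * (2 * 3 ^ n)"
    using Suc by (intro mult_mono) auto
  finally show ?case
    by simp
qed simp

text \<open>The exponential series beyond the quadratic term is dominated by a geometric series
  with ratio \<open>c / 3\<close>.\<close>

lemma exp_le_Bernstein:
  fixes x c :: real
  assumes xc: "\<bar>x\<bar> \<le> c" and c3: "c < 3"
  shows "exp x \<le> 1 + x + x\<^sup>2 / (2 * (1 - c / 3))"
proof -
  have c0: "0 \<le> c"
    using xc by linarith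
  have geom: "(\<lambda>n. (c / 3) ^ n) sums (1 / (1 - c / 3))"
    using c0 c3 by (intro geometric_sums) auto
  have summand: "x ^ (n + 2) / fact (n + 2) \<le> x\<^sup>2 / 2 * (c / 3) ^ n" for n
  proof -
    have "x ^ (n + 2) / fact (n + 2) \<le> x\<^sup>2 * \<bar>x\<bar> ^ n / fact (n + 2)"
      by (intro divide_right_mono)
        (auto simp: power_add power2_eq_square abs_mult power_abs[symmetric]
          intro: order.trans[OF abs_ge_self])
    also have "\<dots> \<le> x\<^sup>2 * c ^ n / (2 * 3 ^ n)"
      using xc two_mult_three_power_le_fact[of n]
      by (intro frac_le mult_left_mono power_mono) auto
    also have "\<dots> = x\<^sup>2 / 2 * (c / 3) ^ n"
      by (simp add: power_divide)
    finally show ?thesis .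
  qed
  have "(\<Sum>n. x ^ (n + 2) / fact (n + 2)) \<le> (\<Sum>n. x\<^sup>2 / 2 * (c / 3) ^ n)"
  proof (rule suminf_le[OF summand])
    show "summable (\<lambda>n. x ^ (n + 2) / fact (n + 2))"
      using summable_ignore_initial_segment[OF summable_exp_generic[of x], of 2]
      by (simp add: divide_inverse_commute)
    show "summable (\<lambda>n. x\<^sup>2 / 2 * (c / 3) ^ n)"
      using geom by (intro summable_mult) (rule sums_summable)
  qed
  also have "\<dots> = x\<^sup>2 / 2 * (1 / (1 - c / 3))"
    using sums_unique[OF sums_mult[OF geom, of "x\<^sup>2 / 2"]] ..
  also have "\<dots> = x\<^sup>2 / (2 * (1 - c / 3))"
    by (simp only: times_divide_eq_right mult_1_right divide_divide_eq_left)
  finally have "(\<Sum>n. x ^ (n + 2) / fact (n + 2)) \<le> x\<^sup>2 / (2 * (1 - c / 3))" .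
  moreover have "exp x = 1 + x + (\<Sum>n. x ^ (n + 2) / fact (n + 2))"
    using exp_first_two_terms[of x] by (simp add: divide_inverse_commute)
  ultimately show ?thesis
    by linarith
qed

lemma (in prob_space) Bernstein_mgf_le:
  fixes X :: "'a \<Rightarrow> real"
  assumes X [measurable]: "X \<in> borel_measurable M"
    and bounded: "AE x in M. \<bar>X x - expectation X\<bar> \<le> b"
    and l: "0 \<le> l" "l * b < 3"
  shows "expectation (\<lambda>x. exp (l * (X x - expectation X)))
           \<le> exp (l\<^sup>2 * variance X / (2 * (1 - l * b / 3)))"
proof -
  let ?\<mu> = "expectation X" and ?K = "1 / (2 * (1 - l * b / 3))"
  have int_X: "integrable M X"
    using bounded
    by (intro integrable_const_bound[where B="\<bar>?\<mu>\<bar> + b"]) (auto elim!: eventually_mono)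
  have int_sq: "integrable M (\<lambda>x. (X x - ?\<mu>)\<^sup>2)"
    using bounded by (intro integrable_const_bound[where B="b\<^sup>2"])
      (auto elim!: eventually_mono simp: abs_le_square_iff[symmetric])
  have int_exp: "integrable M (\<lambda>x. exp (l * (X x - ?\<mu>)))"
    using bounded l(1) by (intro integrable_const_bound[where B="exp (l * b)"])
      (auto elim!: eventually_mono intro: mult_left_mono order.trans[OF abs_ge_self])
  have "AE x in M. exp (l * (X x - ?\<mu>)) \<le> 1 + l * (X x - ?\<mu>) + ?K * l\<^sup>2 * (X x - ?\<mu>)\<^sup>2"
    using bounded
  proof eventually_elim
    case (elim x)
    then have "\<bar>l * (X x - ?\<mu>)\<bar> \<le> l * b"
      using l(1) by (simp add: abs_mult mult_left_mono)
    from exp_le_Bernstein[OF this l(2)] show ?case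
      by (simp add: power_mult_distrib mult_ac)
  qed
  then have "expectation (\<lambda>x. exp (l * (X x - ?\<mu>)))
      \<le> expectation (\<lambda>x. 1 + l * (X x - ?\<mu>) + ?K * l\<^sup>2 * (X x - ?\<mu>)\<^sup>2)"
    using int_X int_sq by (intro integral_mono_AE int_exp) auto
  also have "\<dots> = 1 + ?K * l\<^sup>2 * variance X"
    using int_X int_sq prob_space by (simp add: Bochner_Integration.integral_diff)
  also have "\<dots> \<le> exp (?K * l\<^sup>2 * variance X)"
    by (rule exp_ge_add_one_self[THEN order.trans[rotated]]) simp
  finally show ?thesis
    by (simp add: mult_ac)
qed

text \<open>The variance of \<open>(e \<bullet> u)\<^sup>2\<close> for a unit vector \<open>e\<close> and \<open>u\<close> uniform on the unit sphere
  of \<open>\<real>\<^sup>d\<close>.\<close>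

definition sphere_sq_variance :: "nat \<Rightarrow> real" where
  "sphere_sq_variance d = 2 * (real d - 1) / ((real d)\<^sup>2 * (real d + 2))"

lemma sphere_sq_variance_nonneg: "0 \<le> sphere_sq_variance d"
  by (cases d) (simp_all add: sphere_sq_variance_def)

lemma integral_sphere_unif_inner_square_variance:
  fixes v :: "real^'d::finite"
  shows "(\<integral>u. ((v \<bullet> u)\<^sup>2 - norm v ^ 2 / real CARD('d))\<^sup>2 \<partial>sphere_unif)
           = norm v ^ 4 * sphere_sq_variance CARD('d)"
proof -
  interpret prob_space "sphere_unif :: (real^'d) measure"
    by (rule prob_space_sphere_unif)
  let ?d = "real CARD('d)"
  have mean: "expectation (\<lambda>u. (v \<bullet> u)\<^sup>2) = norm v ^ 2 / ?d"
    by (simp add: integral_sphere_unif_inner_power2)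
  have "variance (\<lambda>u. (v \<bullet> u)\<^sup>2) = 3 * norm v ^ 4 / (?d * (?d + 2)) - (norm v ^ 2 / ?d)\<^sup>2"
    using integrable_sphere_unif_inner_power[of v 2] integrable_sphere_unif_inner_power[of v 4]
    by (subst variance_eq) (simp_all add: mean integral_sphere_unif_inner_power4 power_mult[symmetric])
  also have "\<dots> = norm v ^ 4 * sphere_sq_variance CARD('d)"
    by (simp add: sphere_sq_variance_def divide_simps power2_eq_square power4_eq_xxxx)
      (simp add: algebra_simps)
  finally show ?thesis
    by (simp add: mean)
qed

lemma AE_sphere_unif_inner_square_dev_le:
  fixes v :: "real^'d::finite"
  assumes v: "norm v \<le> 1"
  shows "AE u in sphere_unif. \<bar>(v \<bullet> u)\<^sup>2 - norm v ^ 2 / real CARD('d)\<bar> \<le> 1"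
  using AE_sphere_unif_norm
proof eventually_elim
  case (elim u)
  have "(v \<bullet> u)\<^sup>2 \<le> 1"
    using Cauchy_Schwarz_ineq2[of v u] v elim by (simp add: abs_square_le_1)
  moreover have "0 \<le> norm v ^ 2 / real CARD('d)" "norm v ^ 2 / real CARD('d) \<le> 1"
    using v by (auto simp: divide_le_eq_1 power_le_one intro: order.trans[of _ 1])
  ultimately show ?case
    unfolding abs_le_iff using zero_le_power2[of "v \<bullet> u"] by linarith
qed

lemma sphere_unif_mgf_inner_square_le:
  fixes v :: "real^'d::finite" and l :: real
  assumes v: "norm v \<le> 1" and l: "0 \<le> l" "l < 3"
  shows "(\<integral>u. exp (l * (v \<bullet> u)\<^sup>2) \<partial>sphere_unif)
           \<le> exp (l / real CARD('d) + l\<^sup>2 * sphere_sq_variance CARD('d) / (2 * (1 - l / 3)))"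
proof -
  let ?S = "sphere_unif :: (real^'d) measure"
  interpret prob_space ?S
    by (rule prob_space_sphere_unif)
  let ?Z = "\<lambda>u. (v \<bullet> u)\<^sup>2" and ?d = "real CARD('d)" and ?\<sigma> = "sphere_sq_variance CARD('d)"
  let ?\<mu> = "norm v ^ 2 / ?d"
  have mean: "expectation ?Z = ?\<mu>"
    by (simp add: integral_sphere_unif_inner_power2)
  have \<mu>: "?\<mu> \<le> 1 / ?d"
    using v by (auto intro: divide_right_mono simp: power_le_one)
  have "norm v ^ 4 * ?\<sigma> \<le> ?\<sigma>"
    using v sphere_sq_variance_nonneg by (intro mult_left_le_one_le) (auto simp: power_le_one)
  then have "variance ?Z \<le> ?\<sigma>"
    by (simp add: mean integral_sphere_unif_inner_square_variance)
  then have var: "l\<^sup>2 * variance ?Z / (2 * (1 - l / 3)) \<le> l\<^sup>2 * ?\<sigma> / (2 * (1 - l / 3))"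
    using l by (intro divide_right_mono mult_left_mono) auto
  have "AE u in ?S. \<bar>?Z u - expectation ?Z\<bar> \<le> 1"
    using AE_sphere_unif_inner_square_dev_le[OF v] by (simp add: mean)
  then have "expectation (\<lambda>u. exp (l * (?Z u - expectation ?Z)))
      \<le> exp (l\<^sup>2 * variance ?Z / (2 * (1 - l / 3)))"
    using Bernstein_mgf_le[of ?Z 1 l] l by simp
  also have "\<dots> \<le> exp (l\<^sup>2 * ?\<sigma> / (2 * (1 - l / 3)))"
    using var by simp
  finally have centered:
    "expectation (\<lambda>u. exp (l * (?Z u - ?\<mu>))) \<le> exp (l\<^sup>2 * ?\<sigma> / (2 * (1 - l / 3)))"
    by (simp only: mean)
  have "(\<integral>u. exp (l * ?Z u) \<partial>?S) = exp (l * ?\<mu>) * expectation (\<lambda>u. exp (l * (?Z u - ?\<mu>)))"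
    by (simp add: exp_diff right_diff_distrib)
  also have "\<dots> \<le> exp (l / ?d) * exp (l\<^sup>2 * ?\<sigma> / (2 * (1 - l / 3)))"
    using mult_left_mono[OF \<mu> l(1)] centered by (intro mult_mono) (auto intro: integral_nonneg)
  finally show ?thesis
    by (simp add: exp_add)
qed

lemma prob_space_sphere_cols: "prob_space sphere_cols"
  unfolding sphere_cols_def by (intro prob_space_PiM prob_space_sphere_unif)

lemma sphere_cols_mgf_le:
  fixes v :: "real^'d::finite" and l :: real
  assumes v: "norm v \<le> 1" and l: "0 \<le> l" "l < 3"
  shows "integrable (sphere_cols :: ('k::finite \<Rightarrow> real^'d) measure)
           (\<lambda>x. exp (l * (\<Sum>j\<in>UNIV. (v \<bullet> x j)\<^sup>2)))"
    and "(\<integral>x. exp (l * (\<Sum>j\<in>UNIV. (v \<bullet> x j)\<^sup>2)) \<partial>(sphere_cols :: ('k \<Rightarrow> real^'d) measure))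
           \<le> exp (l / real CARD('d) + l\<^sup>2 * sphere_sq_variance CARD('d) / (2 * (1 - l / 3))) ^ CARD('k)"
proof -
  interpret product_sigma_finite "\<lambda>_::'k. sphere_unif :: (real^'d) measure"
    by (simp add: product_sigma_finite_def prob_space_imp_sigma_finite prob_space_sphere_unif)
  have int: "integrable sphere_unif (\<lambda>u::real^'d. exp (l * (v \<bullet> u)\<^sup>2))"
  proof (rule integrable_sphere_unif_bounded[where B="exp l"])
    fix u :: "real^'d" assume "norm u = 1"
    then have "(v \<bullet> u)\<^sup>2 \<le> 1"
      using Cauchy_Schwarz_ineq2[of v u] v by (simp add: abs_square_le_1)
    then show "\<bar>exp (l * (v \<bullet> u)\<^sup>2)\<bar> \<le> exp l"
      using l(1) by (simp add: mult_left_le)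
  qed measurable
  have prod: "exp (l * (\<Sum>j\<in>UNIV. (v \<bullet> x j)\<^sup>2)) = (\<Prod>j\<in>UNIV. exp (l * (v \<bullet> x j)\<^sup>2))"
    for x :: "'k \<Rightarrow> real^'d"
    by (simp add: sum_distrib_left exp_sum)
  show "integrable (sphere_cols :: ('k \<Rightarrow> real^'d) measure) (\<lambda>x. exp (l * (\<Sum>j\<in>UNIV. (v \<bullet> x j)\<^sup>2)))"
    unfolding prod sphere_cols_def
    by (rule product_integrable_prod[where f="\<lambda>_ u. exp (l * (v \<bullet> u)\<^sup>2)", simplified]) (simp add: int)
  have "(\<integral>x. exp (l * (\<Sum>j\<in>UNIV. (v \<bullet> x j)\<^sup>2)) \<partial>(sphere_cols :: ('k \<Rightarrow> real^'d) measure))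
      = (\<integral>u. exp (l * (v \<bullet> u)\<^sup>2) \<partial>sphere_unif) ^ CARD('k)"
    unfolding prod sphere_cols_def
    by (subst product_integral_prod[of UNIV "\<lambda>_ u. exp (l * (v \<bullet> u)\<^sup>2)"]) (simp_all add: int)
  also have "\<dots> \<le> exp (l / real CARD('d) + l\<^sup>2 * sphere_sq_variance CARD('d) / (2 * (1 - l / 3))) ^ CARD('k)"
    by (intro power_mono sphere_unif_mgf_inner_square_le v l integral_nonneg) auto
  finally show "(\<integral>x. exp (l * (\<Sum>j\<in>UNIV. (v \<bullet> x j)\<^sup>2)) \<partial>(sphere_cols :: ('k \<Rightarrow> real^'d) measure))
           \<le> exp (l / real CARD('d) + l\<^sup>2 * sphere_sq_variance CARD('d) / (2 * (1 - l / 3))) ^ CARD('k)" .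
qed

lemma Bernstein_deviation_square_ge:
  fixes V L :: real
  assumes "0 \<le> V" "0 \<le> L"
  defines "t \<equiv> 2 / 3 * L + sqrt (2 * V * L)"
  shows "2 * L * (V + t / 3) \<le> t\<^sup>2"
proof -
  define r where "r = sqrt (2 * V * L)"
  have r: "0 \<le> r" "r\<^sup>2 = 2 * V * L"
    using assms by (simp_all add: r_def)
  have "t\<^sup>2 - 2 * L * (V + t / 3) = 2 / 3 * L * r + (r\<^sup>2 - 2 * V * L)"
    unfolding t_def r_def[symmetric] power2_eq_square by algebra
  moreover have "0 \<le> 2 / 3 * L * r"
    using assms r(1) by simp
  ultimately show ?thesis
    using r(2) by linarith
qed

text \<open>The witness is Bernstein's choice \<open>l = t / (V + t / 3)\<close>.\<close>

lemma Bernstein_parameter_exists: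
  fixes V L :: real
  assumes V: "0 \<le> V" and L: "0 < L"
  defines "t \<equiv> 2 / 3 * L + sqrt (2 * V * L)"
  shows "\<exists>l. 0 < l \<and> l < 3 \<and> l\<^sup>2 * V / (2 * (1 - l / 3)) - l * t \<le> - L"
proof (cases "V = 0")
  case True
  then show ?thesis
    by (intro exI[of _ "3 / 2"]) (simp add: t_def)
next
  case False
  then have V0: "0 < V"
    using V by simp
  have "0 \<le> sqrt (2 * V * L)"
    using V L by simp
  then have t0: "0 < t"
    using L unfolding t_def by linarith
  have den: "0 < V + t / 3"
    using V0 t0 by linarith
  define l where "l = t / (V + t / 3)"
  have l: "0 < l" "l < 3"
    using V0 t0 den by (simp_all add: l_def divide_less_eq)
  have lt: "l * (V + t / 3) = t"
    using den by (simp add: l_def)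
  have one: "1 - l / 3 = V / (V + t / 3)"
    using den by (simp add: l_def field_simps)
  have "l\<^sup>2 * V / (2 * (1 - l / 3)) = l * (l * (V + t / 3)) / 2"
    unfolding one using V0 den by (simp add: field_simps power2_eq_square)
  then have quadratic: "l\<^sup>2 * V / (2 * (1 - l / 3)) = l * t / 2"
    by (simp only: lt)
  have "2 * L * (V + t / 3) \<le> t\<^sup>2"
    unfolding t_def by (rule Bernstein_deviation_square_ge[OF V less_imp_le[OF L]])
  then have "L \<le> t\<^sup>2 / (2 * (V + t / 3))"
    using den by (simp add: le_divide_eq algebra_simps)
  also have "\<dots> = l * t / 2"
    by (simp add: l_def power2_eq_square)
  finally have "l\<^sup>2 * V / (2 * (1 - l / 3)) - l * t \<le> - L"
    unfolding quadratic by linarith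
  with l show ?thesis
    by blast
qed

lemma sphere_cols_tail_le:
  fixes v :: "real^'d::finite"
  assumes v: "norm v \<le> 1" and L: "0 < L"
  defines "V \<equiv> real CARD('k) * sphere_sq_variance CARD('d)"
  shows "measure (sphere_cols :: ('k::finite \<Rightarrow> real^'d) measure)
           {x \<in> space sphere_cols. real CARD('k) / real CARD('d) + (2 / 3 * L + sqrt (2 * V * L))
              < (\<Sum>j\<in>UNIV. (v \<bullet> x j)\<^sup>2)}
         \<le> exp (- L)"
proof -
  let ?M = "sphere_cols :: ('k \<Rightarrow> real^'d) measure"
  let ?S = "\<lambda>x :: 'k \<Rightarrow> real^'d. \<Sum>j\<in>UNIV. (v \<bullet> x j)\<^sup>2"
  let ?k = "real CARD('k)" and ?d = "real CARD('d)" and ?\<sigma> = "sphere_sq_variance CARD('d)"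
  define t where "t = 2 / 3 * L + sqrt (2 * V * L)"
  interpret prob_space ?M
    by (rule prob_space_sphere_cols)
  have "0 \<le> V"
    by (simp add: V_def sphere_sq_variance_nonneg)
  then obtain l where l: "0 < l" "l < 3" and exponent: "l\<^sup>2 * V / (2 * (1 - l / 3)) - l * t \<le> - L"
    using Bernstein_parameter_exists[OF _ L] unfolding t_def by blast
  have [measurable]: "?S \<in> borel_measurable ?M"
    unfolding sphere_cols_def by measurable
  have "measure ?M {x \<in> space ?M. ?k / ?d + t < ?S x}
      \<le> measure ?M {x \<in> space ?M. exp (l * (?k / ?d + t)) \<le> exp (l * ?S x)}"
    using l by (intro finite_measure_mono) auto
  also have "\<dots> \<le> (\<integral>x. exp (l * ?S x) \<partial>?M) / exp (l * (?k / ?d + t))"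
    using l by (intro integral_Markov_inequality_measure[OF sphere_cols_mgf_le(1)[OF v]]) auto
  also have "\<dots> \<le> exp (l / ?d + l\<^sup>2 * ?\<sigma> / (2 * (1 - l / 3))) ^ CARD('k) / exp (l * (?k / ?d + t))"
    using l by (intro divide_right_mono sphere_cols_mgf_le(2)[OF v]) auto
  also have "\<dots> = exp (l\<^sup>2 * V / (2 * (1 - l / 3)) - l * t)"
    by (simp add: V_def exp_of_nat_mult[symmetric] exp_diff[symmetric] algebra_simps)
  also have "\<dots> \<le> exp (- L)"
    using exponent by simp
  finally show ?thesis
    by (simp add: t_def)
qed

lemma power2_frob_norm_diff_single_row:
  fixes X X' :: "real ^ 'd::finite ^ 'n::finite" and u :: "'k::finite \<Rightarrow> real^'d"
  assumes "\<forall>j. j \<noteq> i \<longrightarrow> X $ j = X' $ j"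
  shows "(frob_norm (X ** cols_to_mat u - X' ** cols_to_mat u))\<^sup>2
           = (\<Sum>c\<in>UNIV. ((X $ i - X' $ i) \<bullet> u c)\<^sup>2)"
proof -
  have entry: "(X ** cols_to_mat u) $ r $ c - (X' ** cols_to_mat u) $ r $ c = (X $ r - X' $ r) \<bullet> u c"
    for r c
    by (simp add: matrix_matrix_mult_def cols_to_mat_def inner_vec_def sum_subtractf algebra_simps)
  have "(\<Sum>c\<in>UNIV. ((X ** cols_to_mat u - X' ** cols_to_mat u) $ r $ c)\<^sup>2)
      = (if r = i then \<Sum>c\<in>UNIV. ((X $ i - X' $ i) \<bullet> u c)\<^sup>2 else 0)" for r
    using assms by (simp add: entry)
  then show ?thesis
    unfolding frob_norm_def by (simp add: sum_nonneg)
qed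

lemma w_bound_eq:
  assumes "1 \<le> d"
  shows "w_bound d k \<delta> = real k / real d
           + (2 / 3 * ln (1 / \<delta>) + sqrt (2 * (real k * sphere_sq_variance d) * ln (1 / \<delta>)))"
proof -
  define Q where "Q = real k * ((real d - 1) / (real d + 2)) * ln (1 / \<delta>)"
  have "2 * (real k * sphere_sq_variance d) * ln (1 / \<delta>) = (2 / real d)\<^sup>2 * Q"
    using assms by (simp add: Q_def sphere_sq_variance_def power2_eq_square field_simps)
  then have "sqrt (2 * (real k * sphere_sq_variance d) * ln (1 / \<delta>)) = 2 / real d * sqrt Q"
    by (simp add: real_sqrt_mult)
  then show ?thesis
    by (simp add: w_bound_def Q_def)
qed

theorem lemma2:
  fixes X X' :: "real ^ 'd::finite ^ 'n::finite" and i :: 'n and \<delta> :: real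
  assumes "\<forall>j. j \<noteq> i \<longrightarrow> X $ j = X' $ j"
    and "norm (X $ i - X' $ i) \<le> 1"
    and "0 < \<delta>" and "\<delta> < 1"
  shows "measure (sphere_cols :: ('k::finite \<Rightarrow> real ^ 'd) measure)
           {u \<in> space sphere_cols.
              (frob_norm (X ** cols_to_mat u - X' ** cols_to_mat u))\<^sup>2
                \<le> w_bound CARD('d) CARD('k) \<delta>}
         \<ge> 1 - \<delta>"
proof -
  let ?M = "sphere_cols :: ('k \<Rightarrow> real ^ 'd) measure"
  let ?S = "\<lambda>u :: 'k \<Rightarrow> real^'d. \<Sum>j\<in>UNIV. ((X $ i - X' $ i) \<bullet> u j)\<^sup>2"
  let ?w = "w_bound CARD('d) CARD('k) \<delta>"
  interpret prob_space ?M
    by (rule prob_space_sphere_cols)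
  have "0 < ln (1 / \<delta>)"
    using assms(3,4) by simp
  from sphere_cols_tail_le[OF assms(2) this]
  have "prob {u \<in> space ?M. ?w < ?S u} \<le> \<delta>"
    using assms(3) by (simp add: w_bound_eq ln_div)
  moreover have "{u \<in> space ?M. (frob_norm (X ** cols_to_mat u - X' ** cols_to_mat u))\<^sup>2 \<le> ?w}
      = space ?M - {u \<in> space ?M. ?w < ?S u}"
    unfolding power2_frob_norm_diff_single_row[OF assms(1)] by auto
  moreover have "{u \<in> space ?M. ?w < ?S u} \<in> events"
    unfolding sphere_cols_def by measurable
  ultimately show ?thesis
    by (simp add: prob_compl)
qed

end
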